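(* Let $G$ be a finite graph, $k$ a positive integer, $c$ a $k$-colouring of $G$ and $u\in V(G)$. Then $D_c$ is an independent set of $\mathcal{K}_k(G)$, and no colouring in $D_c$ is adjacent in $\mathcal{K}_k(G)$ to a colouring in $C_{c,u}$.
   Context: A $k$-colouring of $G$ is a map $c:V(G)\to\{1,\dots,k\}$ with $c(x)\neq c(y)$ for every edge $xy$. A Kempe swap from $c$: choose distinct colours $i,j$ and a connected component $H$ of the subgraph of $G$ induced by $c^{-1}(\{i,j\})$, and exchange colours $i,j$ on $H$; it is trivial if it changes the colour of exactly one vertex. $\mathcal{K}_k(G)$ has as vertices all $k$-colourings, two distinct colourings adjacent iff one is obtained from the other by a single Kempe swap. $C_{c,u}$ is the set of $k$-colourings differing from $c$ exactly at $u$; $D_c$ is the set of neighbours of $c$ in $\mathcal{K}_k(G)$ obtained from $c$ by a non-trivial Kempe swap (i.e. differing from $c$ at at least two vertices). *)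

theory Defs
  imports Main
begin

definition fin_graph :: "'a set \<Rightarrow> ('a \<Rightarrow> 'a \<Rightarrow> bool) \<Rightarrow> bool" where
  "fin_graph V E \<longleftrightarrow> finite V \<and> (\<forall>x y. E x y \<longrightarrow> x \<in> V \<and> y \<in> V)
     \<and> (\<forall>x y. E x y \<longrightarrow> E y x) \<and> (\<forall>x. \<not> E x x)"

text \<open>A k-colouring: proper map V -> {1..k}; normalised to 0 outside V so that
  colourings are determined by their values on V.\<close>
definition colouring :: "'a set \<Rightarrow> ('a \<Rightarrow> 'a \<Rightarrow> bool) \<Rightarrow> nat \<Rightarrow> ('a \<Rightarrow> nat) \<Rightarrow> bool" where
  "colouring V E k c \<longleftrightarrow> (\<forall>x\<in>V. c x \<in> {1..k}) \<and> (\<forall>x. x \<notin> V \<longrightarrow> c x = 0)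
     \<and> (\<forall>x\<in>V. \<forall>y\<in>V. E x y \<longrightarrow> c x \<noteq> c y)"

definition bichrom :: "'a set \<Rightarrow> ('a \<Rightarrow> nat) \<Rightarrow> nat \<Rightarrow> nat \<Rightarrow> 'a set" where
  "bichrom V c i j = {x \<in> V. c x = i \<or> c x = j}"

definition kempe_chain :: "'a set \<Rightarrow> ('a \<Rightarrow> 'a \<Rightarrow> bool) \<Rightarrow> ('a \<Rightarrow> nat) \<Rightarrow> nat \<Rightarrow> nat \<Rightarrow> 'a \<Rightarrow> 'a set" where
  "kempe_chain V E c i j v =
     {w. (\<lambda>x y. E x y \<and> x \<in> bichrom V c i j \<and> y \<in> bichrom V c i j)\<^sup>*\<^sup>* v w}"

definition swap_on :: "('a \<Rightarrow> nat) \<Rightarrow> nat \<Rightarrow> nat \<Rightarrow> 'a set \<Rightarrow> 'a \<Rightarrow> nat" where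
  "swap_on c i j H = (\<lambda>x. if x \<in> H then (if c x = i then j else if c x = j then i else c x) else c x)"

definition kempe_adj :: "'a set \<Rightarrow> ('a \<Rightarrow> 'a \<Rightarrow> bool) \<Rightarrow> nat \<Rightarrow> ('a \<Rightarrow> nat) \<Rightarrow> ('a \<Rightarrow> nat) \<Rightarrow> bool" where
  "kempe_adj V E k c d \<longleftrightarrow> colouring V E k c \<and> colouring V E k d \<and> c \<noteq> d \<and>
     (\<exists>i j v. i \<in> {1..k} \<and> j \<in> {1..k} \<and> i \<noteq> j \<and> v \<in> bichrom V c i j \<and>
        d = swap_on c i j (kempe_chain V E c i j v))"

definition C_set :: "'a set \<Rightarrow> ('a \<Rightarrow> 'a \<Rightarrow> bool) \<Rightarrow> nat \<Rightarrow> ('a \<Rightarrow> nat) \<Rightarrow> 'a \<Rightarrow> ('a \<Rightarrow> nat) set" where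
  "C_set V E k c u = {d. colouring V E k d \<and> {x \<in> V. d x \<noteq> c x} = {u}}"

definition D_set :: "'a set \<Rightarrow> ('a \<Rightarrow> 'a \<Rightarrow> bool) \<Rightarrow> nat \<Rightarrow> ('a \<Rightarrow> nat) \<Rightarrow> ('a \<Rightarrow> nat) set" where
  "D_set V E k c = {d. kempe_adj V E k c d \<and> card {x \<in> V. d x \<noteq> c x} \<ge> 2}"

end

theory Submission
  imports Defs
begin

text \<open>Let d arise from c by swapping the colours i, j on a Kempe chain H. A further Kempe
  swap from d that restores the colour of c at some vertex of H must exchange i and j, and its
  chain, which meets H and lives on the same i-j-coloured vertices, is H itself; so it gives
  back c. Hence a Kempe neighbour of d other than c differs from c on all of H. Since
  |H| \<ge> 2, this rules out neighbours in C_{c,u}; and two adjacent members of D_c would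
  differ from c on the same chain, on which both of its colours occur, so they coincide.\<close>

lemma card_ge_2_obtains_other:
  assumes "card A \<ge> 2"
  obtains x where "x \<in> A" "x \<noteq> u"
proof -
  have "\<not> A \<subseteq> {u}"
  proof
    assume "A \<subseteq> {u}"
    then have "card A \<le> 1"
      using card_mono[of "{u}" A] by simp
    with assms show False
      by simp
  qed
  with that show ?thesis
    by blast
qed

lemma bichrom_eq: "bichrom V c i j = {x \<in> V. c x \<in> {i, j}}"
  unfolding bichrom_def by auto

lemma bichrom_swap_on: "bichrom V (swap_on c i j H) i j = bichrom V c i j"
  unfolding bichrom_def swap_on_def by auto

lemma kempe_chain_swap_on: "kempe_chain V E (swap_on c i j H) i j v = kempe_chain V E c i j v"
  unfolding kempe_chain_def bichrom_swap_on ..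

lemma swap_on_swap_on: "i \<noteq> j \<Longrightarrow> swap_on (swap_on c i j H) i j H = c"
  unfolding swap_on_def by auto

lemma kempe_chain_colour_pair:
  "{i, j} = {p, q} \<Longrightarrow> kempe_chain V E c i j v = kempe_chain V E c p q v"
  unfolding kempe_chain_def bichrom_eq by simp

lemma swap_on_colour_pair: "{i, j} = {p, q} \<Longrightarrow> swap_on c i j H = swap_on c p q H"
  unfolding swap_on_def by (auto simp: doubleton_eq_iff fun_eq_iff)

lemma start_mem_kempe_chain: "v \<in> kempe_chain V E c i j v"
  unfolding kempe_chain_def by simp

lemma kempe_chain_subset_bichrom:
  assumes "v \<in> bichrom V c i j"
  shows "kempe_chain V E c i j v \<subseteq> bichrom V c i j"
proof
  fix w assume "w \<in> kempe_chain V E c i j v"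
  then have "(\<lambda>x y. E x y \<and> x \<in> bichrom V c i j \<and> y \<in> bichrom V c i j)\<^sup>*\<^sup>* v w"
    unfolding kempe_chain_def by simp
  then show "w \<in> bichrom V c i j"
    using assms by (induction rule: rtranclp_induct) auto
qed

lemma kempe_chain_eq_if_mem:
  assumes "symp E" and "w \<in> kempe_chain V E c i j v"
  shows "kempe_chain V E c i j w = kempe_chain V E c i j v"
proof -
  let ?R = "\<lambda>x y. E x y \<and> x \<in> bichrom V c i j \<and> y \<in> bichrom V c i j"
  have "symp ?R\<^sup>*\<^sup>*"
    using \<open>symp E\<close> by (intro symp_rtranclp) (auto simp: symp_def)
  moreover have "?R\<^sup>*\<^sup>* v w"
    using assms(2) unfolding kempe_chain_def by simp
  ultimately show ?thesis
    unfolding kempe_chain_def by (auto intro: rtranclp_trans dest: sympD)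
qed

lemma changed_by_kempe_swap:
  assumes "i \<noteq> j" and "v \<in> bichrom V c i j"
  shows "{x \<in> V. swap_on c i j (kempe_chain V E c i j v) x \<noteq> c x} = kempe_chain V E c i j v"
  using assms kempe_chain_subset_bichrom[OF assms(2)]
  unfolding swap_on_def bichrom_def by auto

lemma kempe_adj_sym:
  assumes "kempe_adj V E k c d"
  shows "kempe_adj V E k d c"
proof -
  from assms obtain i j v where ij: "i \<in> {1..k}" "j \<in> {1..k}" "i \<noteq> j"
    and v: "v \<in> bichrom V c i j" and d: "d = swap_on c i j (kempe_chain V E c i j v)"
    unfolding kempe_adj_def by blast
  have "c = swap_on d i j (kempe_chain V E d i j v)"
    using d kempe_chain_swap_on swap_on_swap_on[OF \<open>i \<noteq> j\<close>] by metis
  moreover have "v \<in> bichrom V d i j"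
    using d v bichrom_swap_on by metis
  ultimately show ?thesis
    using assms ij unfolding kempe_adj_def by metis
qed

lemma kempe_swap_undone_if_agrees:
  assumes "symp E" and "i \<noteq> j" and "p \<noteq> q" and v: "v \<in> bichrom V c i j"
    and d: "d = swap_on c i j (kempe_chain V E c i j v)"
    and e: "e = swap_on d p q (kempe_chain V E d p q w)"
    and x: "x \<in> kempe_chain V E c i j v" and "e x = c x"
  shows "e = c"
proof -
  have cx: "c x \<in> {i, j}"
    using kempe_chain_subset_bichrom[OF v] x by (auto simp: bichrom_eq)
  have dx: "d x \<in> {i, j}" "d x \<noteq> c x"
    using d x cx \<open>i \<noteq> j\<close> unfolding swap_on_def by auto
  then have x_moved: "x \<in> kempe_chain V E d p q w"
    using e \<open>e x = c x\<close> unfolding swap_on_def by (auto split: if_splits)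
  then have "d x \<in> {p, q}" "c x \<in> {p, q}"
    using e \<open>e x = c x\<close> dx(2) unfolding swap_on_def by (auto split: if_splits)
  then have pq: "{p, q} = {i, j}"
    using cx dx \<open>i \<noteq> j\<close> \<open>p \<noteq> q\<close> by auto
  have K: "kempe_chain V E d p q w = kempe_chain V E c i j w"
    using kempe_chain_colour_pair[OF pq] d kempe_chain_swap_on by metis
  also have "\<dots> = kempe_chain V E c i j x"
    using kempe_chain_eq_if_mem[OF \<open>symp E\<close>] x_moved K by metis
  also have "\<dots> = kempe_chain V E c i j v"
    using kempe_chain_eq_if_mem[OF \<open>symp E\<close> x] .
  finally have "e = swap_on d i j (kempe_chain V E c i j v)"
    using e swap_on_colour_pair[OF pq] by simp
  then show ?thesis
    using d swap_on_swap_on[OF \<open>i \<noteq> j\<close>] by simp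
qed

lemma kempe_chain_colours:
  assumes "colouring V E k c" and "v \<in> bichrom V c i j"
    and "card (kempe_chain V E c i j v) \<ge> 2"
  shows "c ` kempe_chain V E c i j v = {i, j}"
proof -
  let ?R = "\<lambda>x y. E x y \<and> x \<in> bichrom V c i j \<and> y \<in> bichrom V c i j"
  obtain y where "y \<in> kempe_chain V E c i j v" "y \<noteq> v"
    using assms(3) by (rule card_ge_2_obtains_other)
  then obtain z where z: "?R v z" "?R\<^sup>*\<^sup>* z y"
    unfolding kempe_chain_def by (blast elim: converse_rtranclpE)
  then have "c v \<noteq> c z"
    using assms(1) unfolding colouring_def bichrom_def by blast
  moreover have "c v \<in> c ` kempe_chain V E c i j v" "c z \<in> c ` kempe_chain V E c i j v"
    using z start_mem_kempe_chain unfolding kempe_chain_def by blast+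
  moreover have "c ` kempe_chain V E c i j v \<subseteq> {i, j}"
    using kempe_chain_subset_bichrom[OF assms(2)] by (auto simp: bichrom_eq)
  ultimately show ?thesis
    by blast
qed

lemma D_setE:
  assumes "d \<in> D_set V E k c"
  obtains i j v where "i \<noteq> j" "v \<in> bichrom V c i j"
    "d = swap_on c i j (kempe_chain V E c i j v)"
    "{x \<in> V. d x \<noteq> c x} = kempe_chain V E c i j v"
proof -
  from assms obtain i j v where "i \<noteq> j" "v \<in> bichrom V c i j"
    "d = swap_on c i j (kempe_chain V E c i j v)"
    unfolding D_set_def kempe_adj_def by blast
  with changed_by_kempe_swap that show ?thesis by metis
qed

lemma D_set_adj_agreeing_eq:
  assumes "symp E" and "d \<in> D_set V E k c" and "kempe_adj V E k d e"
    and "x \<in> V" and "d x \<noteq> c x" and "e x = c x"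
  shows "e = c"
proof -
  obtain i j v where ij: "i \<noteq> j" and v: "v \<in> bichrom V c i j"
    and d: "d = swap_on c i j (kempe_chain V E c i j v)"
    and changed: "{x \<in> V. d x \<noteq> c x} = kempe_chain V E c i j v"
    using assms(2) by (rule D_setE)
  obtain p q w where pq: "p \<noteq> q" and e: "e = swap_on d p q (kempe_chain V E d p q w)"
    using assms(3) unfolding kempe_adj_def by blast
  have "x \<in> kempe_chain V E c i j v"
    using changed assms(4,5) by blast
  from kempe_swap_undone_if_agrees[OF assms(1) ij pq v d e this assms(6)]
  show ?thesis .
qed

lemma D_set_independent:
  assumes "symp E" and d1: "d1 \<in> D_set V E k c" and d2: "d2 \<in> D_set V E k c"
  shows "\<not> kempe_adj V E k d1 d2"
proof
  assume adj: "kempe_adj V E k d1 d2"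
  have c: "colouring V E k c" "c \<noteq> d1" "c \<noteq> d2"
    using d1 d2 unfolding D_set_def kempe_adj_def by auto
  have changed_mono: "{x \<in> V. d x \<noteq> c x} \<subseteq> {x \<in> V. d' x \<noteq> c x}"
    if "d \<in> D_set V E k c" "kempe_adj V E k d d'" "c \<noteq> d'" for d d'
    using D_set_adj_agreeing_eq[OF \<open>symp E\<close> that(1,2)] that(3) by blast
  have same_changed: "{x \<in> V. d1 x \<noteq> c x} = {x \<in> V. d2 x \<noteq> c x}"
    using changed_mono[OF d1 adj c(3)] changed_mono[OF d2 kempe_adj_sym[OF adj] c(2)]
    by (rule subset_antisym)
  obtain i j v where v: "v \<in> bichrom V c i j"
    and d1_eq: "d1 = swap_on c i j (kempe_chain V E c i j v)"
    and H: "{x \<in> V. d1 x \<noteq> c x} = kempe_chain V E c i j v"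
    using d1 by (rule D_setE)
  obtain p q w where w: "w \<in> bichrom V c p q"
    and d2_eq: "d2 = swap_on c p q (kempe_chain V E c p q w)"
    and K: "{x \<in> V. d2 x \<noteq> c x} = kempe_chain V E c p q w"
    using d2 by (rule D_setE)
  have "c ` kempe_chain V E c i j v = {i, j}"
    using kempe_chain_colours[OF c(1) v] d1 H unfolding D_set_def by simp
  moreover have "c ` kempe_chain V E c p q w = {p, q}"
    using kempe_chain_colours[OF c(1) w] d2 K unfolding D_set_def by simp
  ultimately have "{i, j} = {p, q}" "kempe_chain V E c i j v = kempe_chain V E c p q w"
    using same_changed H K by auto
  then have "d1 = d2"
    using d1_eq d2_eq swap_on_colour_pair by simp
  with c adj show False
    unfolding kempe_adj_def by blast
qed

lemma D_set_not_adj_C_set: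
  assumes "symp E" and d: "d \<in> D_set V E k c" and e: "e \<in> C_set V E k c u"
  shows "\<not> kempe_adj V E k d e"
proof
  assume adj: "kempe_adj V E k d e"
  have e_changed: "{x \<in> V. e x \<noteq> c x} = {u}"
    using e unfolding C_set_def by blast
  have "card {x \<in> V. d x \<noteq> c x} \<ge> 2"
    using d unfolding D_set_def by blast
  then obtain x where "x \<in> V" "d x \<noteq> c x" "x \<noteq> u"
    by (rule card_ge_2_obtains_other) blast
  then have "e = c"
    using D_set_adj_agreeing_eq[OF assms(1) d adj] e_changed by blast
  with e_changed show False by auto
qed

theorem lemma3p2:
  fixes V :: "'a set" and E :: "'a \<Rightarrow> 'a \<Rightarrow> bool" and k :: nat
    and c :: "'a \<Rightarrow> nat" and u :: 'a
  assumes "fin_graph V E" and "k \<ge> 1" and "colouring V E k c" and "u \<in> V"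
  shows "(\<forall>d1\<in>D_set V E k c. \<forall>d2\<in>D_set V E k c. \<not> kempe_adj V E k d1 d2)
       \<and> (\<forall>d\<in>D_set V E k c. \<forall>e\<in>C_set V E k c u. \<not> kempe_adj V E k d e)"
proof -
  have "symp E"
    using assms(1) unfolding fin_graph_def symp_def by blast
  then show ?thesis
    by (simp add: D_set_independent D_set_not_adj_C_set)
qed

end
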